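(* Let $G=(V,E,\gamma,c)$ be a typed DAG task executed on a platform with $M_s\ge1$ cores of each type $s\in S$ under any work-conserving scheduling algorithm, and let $R(G)$ be its worst-case response time. Let $\hat G$ be the scaled graph of $G$. Then \[ R(G)\le len(\hat G)+\sum_{s\in S}\frac{vol_s(G)}{M_s}. \]
   Context: A typed DAG task is $G=(V,E,\gamma,c)$ where $(V,E)$ is a finite directed acyclic graph with a unique source vertex $v_{src}$ and a unique sink vertex $v_{snk}$, $S$ is a finite set of core types, $\gamma:V\to S$ gives the type of each vertex, and $c:V\to\mathbb{R}_{\ge0}$ gives the worst-case execution time (WCET) of each vertex. The platform has, for each $s\in S$, $M_s\ge 1$ cores of type $s$. $vol_s(G)=\sum_{u\in V,\gamma(u)=s}c(u)$. For a path $\pi$, $len(\pi)=\sum_{u\in\pi}c(u)$, and $len(G)$ is the maximum of $len(\pi)$ over paths of $G$. The scaled graph $\hat G=(V,E,\gamma,\hat c)$ has the same vertices, edges and types as $G$, with weights $\hat c(v)=c(v)\,(1-1/M_{\gamma(v)})$; $len(\hat G)$ is the longest path length of $\hat G$ with respect to $\hat c$. Runtime model: a vertex becomes eligible when all its predecessors have finished (the source is eligible at time $0$); a vertex $v$ may only execute on cores of type $\gamma(v)$, one core at a time, for a total execution time of at most $c(v)$ (possibly less). Scheduling is work-conserving: an eligible unfinished vertex of type $s$ must be executing whenever some core of type $s$ is available. The response time of an execution sequence is the finish time of $v_{snk}$; the worst-case response time $R(G)$ is the maximum (supremum) of response times over all possible execution sequences. *)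

theory Defs
  imports "HOL-Analysis.Analysis"
begin

definition typed_dag :: "'v set \<Rightarrow> ('v \<times> 'v) set \<Rightarrow> 'v \<Rightarrow> 'v \<Rightarrow> bool" where
  "typed_dag V E src snk \<longleftrightarrow>
     finite V \<and> E \<subseteq> V \<times> V \<and> acyclic E \<and>
     src \<in> V \<and> snk \<in> V \<and>
     (\<forall>v\<in>V. (\<forall>u. (u, v) \<notin> E) \<longleftrightarrow> v = src) \<and>
     (\<forall>v\<in>V. (\<forall>w. (v, w) \<notin> E) \<longleftrightarrow> v = snk)"

definition is_path :: "'v set \<Rightarrow> ('v \<times> 'v) set \<Rightarrow> 'v list \<Rightarrow> bool" where
  "is_path V E p \<longleftrightarrow> p \<noteq> [] \<and> set p \<subseteq> V \<and>
     (\<forall>i. Suc i < length p \<longrightarrow> (p ! i, p ! Suc i) \<in> E)"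

definition path_len :: "('v \<Rightarrow> real) \<Rightarrow> 'v list \<Rightarrow> real" where
  "path_len w p = (\<Sum>u\<leftarrow>p. w u)"

definition graph_len :: "'v set \<Rightarrow> ('v \<times> 'v) set \<Rightarrow> ('v \<Rightarrow> real) \<Rightarrow> real" where
  "graph_len V E w = Sup (path_len w ` {p. is_path V E p})"

definition vol :: "'v set \<Rightarrow> ('v \<Rightarrow> 's) \<Rightarrow> ('v \<Rightarrow> real) \<Rightarrow> 's \<Rightarrow> real" where
  "vol V \<gamma> c s = (\<Sum>v\<in>{u\<in>V. \<gamma> u = s}. c v)"

definition scaled_wcet :: "('v \<Rightarrow> 's) \<Rightarrow> ('v \<Rightarrow> real) \<Rightarrow> ('s \<Rightarrow> nat) \<Rightarrow> 'v \<Rightarrow> real" where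
  "scaled_wcet \<gamma> c M v = c v * (1 - 1 / real (M (\<gamma> v)))"

(* Execution sequence: exec t v  <-> vertex v is executing (on some core of its type) at time t;
   fin v = finish time of v. *)
definition eligible :: "('v \<times> 'v) set \<Rightarrow> ('v \<Rightarrow> real) \<Rightarrow> real \<Rightarrow> 'v \<Rightarrow> bool" where
  "eligible E fin t v \<longleftrightarrow> (\<forall>u. (u, v) \<in> E \<longrightarrow> fin u \<le> t)"

definition valid_execution ::
  "'v set \<Rightarrow> ('v \<times> 'v) set \<Rightarrow> ('v \<Rightarrow> 's) \<Rightarrow> ('v \<Rightarrow> real) \<Rightarrow> ('s \<Rightarrow> nat)
   \<Rightarrow> (real \<Rightarrow> 'v \<Rightarrow> bool) \<Rightarrow> ('v \<Rightarrow> real) \<Rightarrow> bool" where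
  "valid_execution V E \<gamma> c M exec fin \<longleftrightarrow>
     \<comment> \<open>finishing respects precedence and times are nonnegative\<close>
     (\<forall>v\<in>V. 0 \<le> fin v \<and> eligible E fin (fin v) v) \<and>
     \<comment> \<open>a vertex executes only while eligible and unfinished, at times \<ge> 0\<close>
     (\<forall>t v. exec t v \<longrightarrow> v \<in> V \<and> 0 \<le> t \<and> eligible E fin t v \<and> t < fin v) \<and>
     \<comment> \<open>total execution time of v is (measurable and) at most c v\<close>
     (\<forall>v\<in>V. {t. exec t v} \<in> sets lborel \<and> emeasure lborel {t. exec t v} \<le> ennreal (c v)) \<and>
     \<comment> \<open>at most M s vertices of type s execute simultaneously (one core each)\<close>
     (\<forall>t s. card {v\<in>V. \<gamma> v = s \<and> exec t v} \<le> M s) \<and>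
     \<comment> \<open>work conservation\<close>
     (\<forall>t v. v \<in> V \<and> 0 \<le> t \<and> eligible E fin t v \<and> t < fin v \<and>
            card {u\<in>V. \<gamma> u = \<gamma> v \<and> exec t u} < M (\<gamma> v) \<longrightarrow> exec t v)"

definition wcrt ::
  "'v set \<Rightarrow> ('v \<times> 'v) set \<Rightarrow> ('v \<Rightarrow> 's) \<Rightarrow> ('v \<Rightarrow> real) \<Rightarrow> ('s \<Rightarrow> nat) \<Rightarrow> 'v \<Rightarrow> ereal" where
  "wcrt V E \<gamma> c M snk =
     (SUP ef \<in> {(exec, fin). valid_execution V E \<gamma> c M exec fin}. ereal (snd ef snk))"

end

theory Submission
  imports Defs
begin

(* Follow the unfinished predecessor that finishes last, backwards from the sink: this gives a
   path p ending in the sink such that at every time before the sink finishes some vertex u of p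
   is eligible and unfinished.  At such a time either u executes, or all M s cores of type
   s = \<gamma> u are busy, so 1 \<le> (1 - 1/M s) [u executes] + (busy cores of type s)/M s.
   Integrating over [0, fin snk) bounds the first term by the scaled length of p and the second,
   summed over s, by vol s / M s. *)

lemma is_path_trancl:
  assumes "is_path V E p" "i < j" "j < length p"
  shows "(p ! i, p ! j) \<in> E\<^sup>+"
  using assms(2,3)
proof (induction j)
  case (Suc j)
  have edge: "(p ! j, p ! Suc j) \<in> E"
    using assms(1) Suc.prems unfolding is_path_def by blast
  show ?case
  proof (cases "i = j")
    case False
    then have "(p ! i, p ! j) \<in> E\<^sup>+" using Suc by auto
    then show ?thesis using edge by (rule trancl_into_trancl)
  qed (use edge in auto)
qed simp

lemma is_path_distinct:
  assumes "is_path V E p" "acyclic E"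
  shows "distinct p"
proof -
  have "p ! i \<noteq> p ! j" if "i < j" "j < length p" for i j
    using is_path_trancl[OF assms(1) that] assms(2) unfolding acyclic_def by auto
  then show ?thesis unfolding distinct_conv_nth by (metis linorder_neqE_nat)
qed

lemma path_len_eq_sum_set:
  assumes "is_path V E p" "acyclic E"
  shows "path_len w p = (\<Sum>v\<in>set p. w v)"
  unfolding path_len_def using is_path_distinct[OF assms]
  by (simp add: sum_list_distinct_conv_sum_set)

lemma path_len_le_graph_len:
  assumes "is_path V E p" "acyclic E" "finite V" "\<forall>v\<in>V. 0 \<le> w v"
  shows "path_len w p \<le> graph_len V E w"
  unfolding graph_len_def
proof (rule cSup_upper)
  have "path_len w q \<le> (\<Sum>v\<in>V. w v)" if "is_path V E q" for q
  proof -
    have "path_len w q = (\<Sum>v\<in>set q. w v)"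
      using path_len_eq_sum_set[OF that assms(2)] .
    also have "\<dots> \<le> (\<Sum>v\<in>V. w v)"
      using that assms(3,4) unfolding is_path_def by (intro sum_mono2) auto
    finally show ?thesis .
  qed
  then show "bdd_above (path_len w ` {q. is_path V E q})"
    unfolding bdd_above_def by blast
qed (use assms(1) in blast)

lemma is_path_snoc:
  assumes "is_path V E p" "(last p, v) \<in> E" "v \<in> V"
  shows "is_path V E (p @ [v])"
  unfolding is_path_def
proof (intro conjI allI impI)
  show "set (p @ [v]) \<subseteq> V" using assms(1,3) unfolding is_path_def by auto
next
  fix i assume i: "Suc i < length (p @ [v])"
  have "p \<noteq> []" using assms(1) unfolding is_path_def by simp
  show "((p @ [v]) ! i, (p @ [v]) ! Suc i) \<in> E"
  proof (cases "Suc i < length p")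
    case True
    then show ?thesis using assms(1) unfolding is_path_def by (simp add: nth_append)
  next
    case False
    with i have "Suc i = length p" by simp
    with \<open>p \<noteq> []\<close> have "p ! i = last p" by (metis diff_Suc_1 last_conv_nth)
    then show ?thesis using \<open>Suc i = length p\<close> assms(2) by (simp add: nth_append)
  qed
qed simp

lemma critical_path_exists:
  assumes "finite E" "acyclic E" "E \<subseteq> V \<times> V" "\<forall>v\<in>V. eligible E fin (fin v) v" "v \<in> V"
  shows "\<exists>p. is_path V E p \<and> last p = v \<and>
           (\<forall>t. 0 \<le> t \<and> t < fin v \<longrightarrow> (\<exists>u\<in>set p. eligible E fin t u \<and> t < fin u))"
  using assms(5)
proof (induction v rule: wf_induct_rule[OF finite_acyclic_wf[OF assms(1,2)]])
  case (1 v)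
  define preds where "preds = {u. (u, v) \<in> E}"
  have "finite preds"
    unfolding preds_def using finite_imageI[OF assms(1), of fst]
    by (rule finite_subset[rotated]) force
  show ?case
  proof (cases "preds = {}")
    case True
    then have "eligible E fin t v" for t unfolding eligible_def preds_def by auto
    then show ?thesis using 1(2) by (intro exI[of _ "[v]"]) (auto simp: is_path_def)
  next
    case False
    obtain u where u: "u \<in> preds" and u_last: "\<forall>w\<in>preds. fin w \<le> fin u"
      using Max_in[of "fin ` preds"] Max_ge[of "fin ` preds"] \<open>finite preds\<close> False
      by (metis empty_is_image finite_imageI image_eqI imageE)
    have "u \<in> V" using u assms(3) unfolding preds_def by auto
    then obtain p where p: "is_path V E p" "last p = u"
      and cover: "\<forall>t. 0 \<le> t \<and> t < fin u \<longrightarrow> (\<exists>w\<in>set p. eligible E fin t w \<and> t < fin w)"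
      using 1(1)[of u] u unfolding preds_def by auto
    have "\<exists>w\<in>set (p @ [v]). eligible E fin t w \<and> t < fin w"
      if "0 \<le> t" "t < fin v" for t
    proof (cases "t < fin u")
      case False
      then have "eligible E fin t v" using u_last unfolding eligible_def preds_def by force
      then show ?thesis using that by auto
    qed (use cover that in auto)
    moreover have "is_path V E (p @ [v])"
      using is_path_snoc[OF p(1)] p(2) u 1(2) unfolding preds_def by simp
    ultimately show ?thesis by (intro exI[of _ "p @ [v]"]) auto
  qed
qed

definition busy :: "(real \<Rightarrow> 'v \<Rightarrow> bool) \<Rightarrow> 'v \<Rightarrow> real \<Rightarrow> real" where
  "busy exec v = indicator {t. exec t v}"

definition busy_cores :: "'v set \<Rightarrow> ('v \<Rightarrow> 's) \<Rightarrow> (real \<Rightarrow> 'v \<Rightarrow> bool) \<Rightarrow> 's \<Rightarrow> real \<Rightarrow> real" where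
  "busy_cores V \<gamma> exec s t = (\<Sum>v\<in>{v\<in>V. \<gamma> v = s}. busy exec v t)"

definition critical_load ::
  "'v set \<Rightarrow> 's set \<Rightarrow> ('v \<Rightarrow> 's) \<Rightarrow> ('s \<Rightarrow> nat) \<Rightarrow> (real \<Rightarrow> 'v \<Rightarrow> bool) \<Rightarrow> 'v set
   \<Rightarrow> real \<Rightarrow> real" where
  "critical_load V S \<gamma> M exec P t =
     (\<Sum>u\<in>P. (1 - 1 / real (M (\<gamma> u))) * busy exec u t)
     + (\<Sum>s\<in>S. busy_cores V \<gamma> exec s t / real (M s))"

lemma one_minus_inverse_nat_nonneg: "0 \<le> 1 - 1 / real (n :: nat)"
  by (cases n) simp_all

lemma scaled_wcet_nonneg: "0 \<le> c v \<Longrightarrow> 0 \<le> scaled_wcet \<gamma> c M v"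
  unfolding scaled_wcet_def using one_minus_inverse_nat_nonneg by simp

lemma busy_nonneg: "0 \<le> busy exec v t"
  unfolding busy_def by simp

lemma scaled_busy_nonneg: "0 \<le> (1 - 1 / real (n :: nat)) * busy exec v t"
  using one_minus_inverse_nat_nonneg busy_nonneg by (rule mult_nonneg_nonneg)

lemma busy_cores_nonneg: "0 \<le> busy_cores V \<gamma> exec s t"
  unfolding busy_cores_def by (intro sum_nonneg busy_nonneg)

lemma busy_cores_eq_card:
  assumes "finite V"
  shows "busy_cores V \<gamma> exec s t = real (card {v\<in>V. \<gamma> v = s \<and> exec t v})"
proof -
  have "busy_cores V \<gamma> exec s t = (\<Sum>v\<in>{v\<in>V. \<gamma> v = s}. of_bool (exec t v) :: real)"
    unfolding busy_cores_def busy_def by (simp add: indicator_def)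
  also have "\<dots> = real (card ({v\<in>V. \<gamma> v = s} \<inter> {v. exec t v}))"
    using assms by simp
  also have "{v\<in>V. \<gamma> v = s} \<inter> {v. exec t v} = {v\<in>V. \<gamma> v = s \<and> exec t v}" by auto
  finally show ?thesis .
qed

lemma valid_execution_busy_time:
  assumes "valid_execution V E \<gamma> c M exec fin" "v \<in> V" "0 \<le> c v"
  shows "integrable lborel (busy exec v)" and "integral\<^sup>L lborel (busy exec v) \<le> c v"
proof -
  have sets: "{t. exec t v} \<in> sets lborel"
    and bound: "emeasure lborel {t. exec t v} \<le> ennreal (c v)"
    using assms(1,2) unfolding valid_execution_def by blast+
  then show "integrable lborel (busy exec v)"
    using le_less_trans[OF bound ennreal_less_top] unfolding busy_def
    by (intro integrable_real_indicator) (auto simp: less_top)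
  have "measure lborel {t. exec t v} \<le> enn2real (ennreal (c v))"
    unfolding measure_def by (rule enn2real_mono[OF bound ennreal_less_top])
  then show "integral\<^sup>L lborel (busy exec v) \<le> c v"
    using assms(3) unfolding busy_def by simp
qed

lemma work_conserving_pending_bound:
  fixes t :: real
  assumes valid: "valid_execution V E \<gamma> c M exec fin" and "finite V" and "u \<in> V"
    and "1 \<le> M (\<gamma> u)" and pending: "0 \<le> t" "eligible E fin t u" "t < fin u"
  shows "1 \<le> (1 - 1 / real (M (\<gamma> u))) * busy exec u t
             + busy_cores V \<gamma> exec (\<gamma> u) t / real (M (\<gamma> u))"
proof -
  define m where "m = real (M (\<gamma> u))"
  define n where "n = card {v\<in>V. \<gamma> v = \<gamma> u \<and> exec t v}"
  have "1 \<le> m" using assms(4) unfolding m_def by simp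
  have cores: "busy_cores V \<gamma> exec (\<gamma> u) t = real n"
    unfolding n_def using busy_cores_eq_card[OF \<open>finite V\<close>] .
  show ?thesis
  proof (cases "n < M (\<gamma> u)")
    case True
    then have "exec t u"
      using valid assms(3) pending unfolding valid_execution_def n_def by blast
    then have "1 \<le> n"
      using assms(2,3) unfolding n_def by (auto simp: Suc_le_eq card_gt_0_iff)
    have "1 = (1 - 1 / m) + 1 / m" by simp
    also have "\<dots> \<le> (1 - 1 / m) + n / m"
      using \<open>1 \<le> n\<close> \<open>1 \<le> m\<close> by (simp add: divide_right_mono)
    finally show ?thesis using \<open>exec t u\<close> cores unfolding m_def busy_def by simp
  next
    case False
    then have "1 \<le> n / m" using \<open>1 \<le> m\<close> unfolding m_def by simp
    moreover have "0 \<le> (1 - 1 / m) * busy exec u t"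
      unfolding m_def by (rule scaled_busy_nonneg)
    ultimately show ?thesis unfolding cores m_def by linarith
  qed
qed

lemma critical_load_nonneg: "0 \<le> critical_load V S \<gamma> M exec P t"
  unfolding critical_load_def
  by (intro add_nonneg_nonneg sum_nonneg divide_nonneg_nonneg scaled_busy_nonneg
      busy_cores_nonneg of_nat_0_le_iff)

lemma critical_load_ge_one:
  fixes t :: real
  assumes valid: "valid_execution V E \<gamma> c M exec fin" and "finite V" "finite S" "\<gamma> ` V \<subseteq> S"
    and "finite P" "P \<subseteq> V" "u \<in> P" "1 \<le> M (\<gamma> u)"
    and pending: "0 \<le> t" "eligible E fin t u" "t < fin u"
  shows "1 \<le> critical_load V S \<gamma> M exec P t"
proof -
  have "u \<in> V" using assms(6,7) by auto
  have "1 \<le> (1 - 1 / real (M (\<gamma> u))) * busy exec u t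
             + busy_cores V \<gamma> exec (\<gamma> u) t / real (M (\<gamma> u))"
    using work_conserving_pending_bound[OF valid \<open>finite V\<close> \<open>u \<in> V\<close>] assms(8) pending .
  also have "\<dots> \<le> critical_load V S \<gamma> M exec P t"
    unfolding critical_load_def
  proof (rule add_mono)
    show "(1 - 1 / real (M (\<gamma> u))) * busy exec u t
            \<le> (\<Sum>u\<in>P. (1 - 1 / real (M (\<gamma> u))) * busy exec u t)"
      using \<open>u \<in> P\<close> scaled_busy_nonneg \<open>finite P\<close> by (rule member_le_sum)
    show "busy_cores V \<gamma> exec (\<gamma> u) t / real (M (\<gamma> u))
            \<le> (\<Sum>s\<in>S. busy_cores V \<gamma> exec s t / real (M s))"
      using \<open>u \<in> V\<close> assms(3,4) busy_cores_nonneg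
      by (intro member_le_sum divide_nonneg_nonneg) auto
  qed
  finally show ?thesis .
qed

lemma critical_load_integral:
  assumes valid: "valid_execution V E \<gamma> c M exec fin" and "finite V" "P \<subseteq> V"
    and c_nonneg: "\<forall>v\<in>V. 0 \<le> c v"
  shows "integrable lborel (critical_load V S \<gamma> M exec P)"
    and "integral\<^sup>L lborel (critical_load V S \<gamma> M exec P)
           \<le> (\<Sum>u\<in>P. scaled_wcet \<gamma> c M u) + (\<Sum>s\<in>S. vol V \<gamma> c s / real (M s))"
proof -
  note busy_int = valid_execution_busy_time(1)[OF valid _ c_nonneg[rule_format]]
  have cores_int: "integrable lborel (busy_cores V \<gamma> exec s)" for s
    unfolding busy_cores_def using busy_int by (intro Bochner_Integration.integrable_sum) auto
  have cores_integral: "integral\<^sup>L lborel (busy_cores V \<gamma> exec s) \<le> vol V \<gamma> c s" for s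
    unfolding busy_cores_def vol_def
    using busy_int valid_execution_busy_time(2)[OF valid] c_nonneg
    by (subst Bochner_Integration.integral_sum) (auto intro!: sum_mono)
  have load_eq: "critical_load V S \<gamma> M exec P
      = (\<lambda>t. (\<Sum>u\<in>P. (1 - 1 / real (M (\<gamma> u))) * busy exec u t)
             + (\<Sum>s\<in>S. busy_cores V \<gamma> exec s t / real (M s)))"
    unfolding critical_load_def ..
  show "integrable lborel (critical_load V S \<gamma> M exec P)"
    unfolding load_eq using assms(3) busy_int cores_int
    by (intro Bochner_Integration.integrable_add Bochner_Integration.integrable_sum
        integrable_mult_right integrable_divide_zero) auto
  have "integral\<^sup>L lborel (critical_load V S \<gamma> M exec P)
      = (\<Sum>u\<in>P. (1 - 1 / real (M (\<gamma> u))) * integral\<^sup>L lborel (busy exec u))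
        + (\<Sum>s\<in>S. integral\<^sup>L lborel (busy_cores V \<gamma> exec s) / real (M s))"
    unfolding load_eq using assms(3) busy_int cores_int
    by (subst Bochner_Integration.integral_add)
      (auto intro!: Bochner_Integration.integrable_sum integrable_divide_zero
        simp: Bochner_Integration.integral_sum subset_eq)
  also have "\<dots> \<le> (\<Sum>u\<in>P. scaled_wcet \<gamma> c M u) + (\<Sum>s\<in>S. vol V \<gamma> c s / real (M s))"
  proof (intro add_mono sum_mono divide_right_mono)
    fix u assume "u \<in> P"
    then have "integral\<^sup>L lborel (busy exec u) \<le> c u"
      using assms(3) valid_execution_busy_time(2)[OF valid] c_nonneg by auto
    then have "integral\<^sup>L lborel (busy exec u) * (1 - 1 / real (M (\<gamma> u)))
                 \<le> c u * (1 - 1 / real (M (\<gamma> u)))"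
      by (rule mult_right_mono[OF _ one_minus_inverse_nat_nonneg])
    then show "(1 - 1 / real (M (\<gamma> u))) * integral\<^sup>L lborel (busy exec u) \<le> scaled_wcet \<gamma> c M u"
      unfolding scaled_wcet_def by (simp only: mult.commute)
  qed (use cores_integral in auto)
  finally show "integral\<^sup>L lborel (critical_load V S \<gamma> M exec P)
           \<le> (\<Sum>u\<in>P. scaled_wcet \<gamma> c M u) + (\<Sum>s\<in>S. vol V \<gamma> c s / real (M s))" .
qed

lemma valid_execution_sink_finish_le:
  assumes dag: "typed_dag V E src snk" and "finite S" and "\<gamma> ` V \<subseteq> S"
    and c_nonneg: "\<forall>v\<in>V. 0 \<le> c v" and M_pos: "\<forall>s\<in>S. 1 \<le> M s"
    and valid: "valid_execution V E \<gamma> c M exec fin"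
  shows "fin snk \<le> graph_len V E (scaled_wcet \<gamma> c M) + (\<Sum>s\<in>S. vol V \<gamma> c s / real (M s))"
proof -
  have "finite V" "E \<subseteq> V \<times> V" "acyclic E" "snk \<in> V"
    using dag unfolding typed_dag_def by auto
  then have "finite E" by (meson finite_SigmaI finite_subset)
  have "0 \<le> fin snk" and "\<forall>v\<in>V. eligible E fin (fin v) v"
    using valid \<open>snk \<in> V\<close> unfolding valid_execution_def by blast+
  then obtain p where p: "is_path V E p"
    and cover: "\<forall>t. 0 \<le> t \<and> t < fin snk \<longrightarrow> (\<exists>u\<in>set p. eligible E fin t u \<and> t < fin u)"
    using critical_path_exists[OF \<open>finite E\<close> \<open>acyclic E\<close> \<open>E \<subseteq> V \<times> V\<close>] \<open>snk \<in> V\<close> by blast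
  have "set p \<subseteq> V" using p unfolding is_path_def by simp
  let ?load = "critical_load V S \<gamma> M exec (set p)"
  have "indicator {0..<fin snk} t \<le> ?load t" for t :: real
  proof (cases "0 \<le> t \<and> t < fin snk")
    case True
    then obtain u where u: "u \<in> set p" "eligible E fin t u" "t < fin u" using cover by blast
    moreover have "1 \<le> M (\<gamma> u)" using u(1) \<open>set p \<subseteq> V\<close> assms(3) M_pos by auto
    ultimately have "1 \<le> ?load t"
      using critical_load_ge_one[OF valid \<open>finite V\<close> assms(2,3) finite_set \<open>set p \<subseteq> V\<close>] True
      by blast
    then show ?thesis using True by simp
  next
    case False
    then show ?thesis using critical_load_nonneg[of V S \<gamma> M exec "set p" t] by simp
  qed
  then have "integral\<^sup>L lborel (indicator {0..<fin snk}) \<le> integral\<^sup>L lborel ?load"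
    using \<open>0 \<le> fin snk\<close> critical_load_integral(1)[OF valid \<open>finite V\<close> \<open>set p \<subseteq> V\<close> c_nonneg]
    by (intro integral_mono integrable_real_indicator) (auto simp: emeasure_lborel_Ico)
  then have "fin snk \<le> integral\<^sup>L lborel ?load"
    using \<open>0 \<le> fin snk\<close> by simp
  also have "\<dots> \<le> (\<Sum>u\<in>set p. scaled_wcet \<gamma> c M u) + (\<Sum>s\<in>S. vol V \<gamma> c s / real (M s))"
    using critical_load_integral(2)[OF valid \<open>finite V\<close> \<open>set p \<subseteq> V\<close> c_nonneg] .
  also have "(\<Sum>u\<in>set p. scaled_wcet \<gamma> c M u) = path_len (scaled_wcet \<gamma> c M) p"
    using path_len_eq_sum_set[OF p \<open>acyclic E\<close>] by simp
  also have "\<dots> \<le> graph_len V E (scaled_wcet \<gamma> c M)"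
    using path_len_le_graph_len[OF p \<open>acyclic E\<close> \<open>finite V\<close>] c_nonneg
    by (simp add: scaled_wcet_nonneg)
  finally show ?thesis by simp
qed

theorem theorem2:
  fixes V :: "'v set" and E :: "('v \<times> 'v) set" and src snk :: 'v
    and S :: "'s set" and \<gamma> :: "'v \<Rightarrow> 's" and c :: "'v \<Rightarrow> real" and M :: "'s \<Rightarrow> nat"
  assumes "typed_dag V E src snk"
    and "finite S" and "\<gamma> ` V \<subseteq> S"
    and "\<forall>v\<in>V. 0 \<le> c v"
    and "\<forall>s\<in>S. 1 \<le> M s"
  shows "wcrt V E \<gamma> c M snk
           \<le> ereal (graph_len V E (scaled_wcet \<gamma> c M) + (\<Sum>s\<in>S. vol V \<gamma> c s / real (M s)))"
  unfolding wcrt_def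
  using valid_execution_sink_finish_le[OF assms] by (auto intro: SUP_least)

end
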